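(* Let $(M,d)$ be a pointed metric space. The space $\mathrm{Lip}_0(M)$ has the $w^*$-LD2P if and only if for every finite cyclically monotonic subset $A\subseteq\widetilde M$ and every $\gamma\in(0,1)$ there exist $u,v\in M$ with $u\ne v$ such that $A\cup\{(u,v)\}$ and $A\cup\{(v,u)\}$ are both $\gamma$-cyclically monotonic.
   Context: $M$ has base point $0$; $\mathrm{Lip}_0(M)$ is the real Banach space of Lipschitz $f\colon M\to\mathbb R$ with $f(0)=0$, normed by the best Lipschitz constant. It is the dual of the Lipschitz-free space $\mathcal F(M)$ (norm-closed span of the point evaluations $\delta_x$ in $\mathrm{Lip}_0(M)^*$). $\mathrm{Lip}_0(M)$ has the $w^*$-LD2P if every $w^*$-slice $\{f\in B_{\mathrm{Lip}_0(M)}: \mu(f)>1-\alpha\}$, with $\mu\in\mathcal F(M)$, $\|\mu\|=1$, $\alpha>0$, has diameter $2$. $\widetilde M=\{(x,y)\in M\times M:x\ne y\}$. For $\gamma\in(0,1]$, $A\subseteq\widetilde M$ is $\gamma$-cyclically monotonic if for every finite sequence $(x_1,y_1),\dots,(x_n,y_n)\in A$, with $y_{n+1}=y_1$, $\sum_{i=1}^n\min\{d(x_i,y_{i+1})-\gamma d(x_i,y_i),\,d(y_i,y_{i+1})\}\ge0$; $A$ is cyclically monotonic if for every such sequence $\sum_i d(x_i,y_{i+1})\ge\sum_i d(x_i,y_i)$. *)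

theory Defs
  imports "HOL-Analysis.Analysis"
begin

text \<open>The pointed metric space M is the whole type 'a (a metric space), base point x0.\<close>

definition Lip0 :: "'a::metric_space \<Rightarrow> ('a \<Rightarrow> real) set" where
  "Lip0 x0 = {f. f x0 = 0 \<and> (\<exists>C. C-lipschitz_on UNIV f)}"

definition lipnorm :: "('a::metric_space \<Rightarrow> real) \<Rightarrow> real" where
  "lipnorm f = Sup {\<bar>f x - f y\<bar> / dist x y | x y. x \<noteq> y}"

definition LipBall :: "'a::metric_space \<Rightarrow> ('a \<Rightarrow> real) set" where
  "LipBall x0 = {f \<in> Lip0 x0. lipnorm f \<le> 1}"

definition molecule :: "'a set \<Rightarrow> ('a \<Rightarrow> real) \<Rightarrow> ('a \<Rightarrow> real) \<Rightarrow> real" where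
  "molecule S a f = (\<Sum>x\<in>S. a x * f x)"

definition dual_norm :: "'a::metric_space \<Rightarrow> (('a \<Rightarrow> real) \<Rightarrow> real) \<Rightarrow> real" where
  "dual_norm x0 \<mu> = Sup ((\<lambda>f. \<bar>\<mu> f\<bar>) ` LipBall x0)"

text \<open>Elements of the Lipschitz-free space F(M): norm limits (in Lip0(M)^*) of
  linear combinations of point evaluations. A functional is identified with its
  restriction to the unit ball, which determines it.\<close>
definition in_free_space :: "'a::metric_space \<Rightarrow> (('a \<Rightarrow> real) \<Rightarrow> real) \<Rightarrow> bool" where
  "in_free_space x0 \<mu> \<longleftrightarrow>
     (\<forall>\<epsilon>>0. \<exists>S a. finite S \<and> (\<forall>f\<in>LipBall x0. \<bar>\<mu> f - molecule S a f\<bar> \<le> \<epsilon>))"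

definition lip_diam :: "('a::metric_space \<Rightarrow> real) set \<Rightarrow> real" where
  "lip_diam F = Sup {lipnorm (f - g) | f g. f \<in> F \<and> g \<in> F}"

definition wstar_slice :: "'a::metric_space \<Rightarrow> (('a \<Rightarrow> real) \<Rightarrow> real) \<Rightarrow> real \<Rightarrow> ('a \<Rightarrow> real) set" where
  "wstar_slice x0 \<mu> \<alpha> = {f \<in> LipBall x0. \<mu> f > 1 - \<alpha>}"

definition wstar_LD2P :: "'a::metric_space \<Rightarrow> bool" where
  "wstar_LD2P x0 \<longleftrightarrow>
     (\<forall>\<mu> \<alpha>. in_free_space x0 \<mu> \<and> dual_norm x0 \<mu> = 1 \<and> \<alpha> > 0
        \<longrightarrow> lip_diam (wstar_slice x0 \<mu> \<alpha>) = 2)"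

definition tildeM :: "('a \<times> 'a) set" where
  "tildeM = {(x, y). x \<noteq> y}"

text \<open>Finite sequences (x_1,y_1),...,(x_n,y_n) are p 0, ..., p (n-1); y_{n+1} = y_1.\<close>
definition gamma_cyc_mono :: "real \<Rightarrow> ('a::metric_space \<times> 'a) set \<Rightarrow> bool" where
  "gamma_cyc_mono \<gamma> A \<longleftrightarrow> A \<subseteq> tildeM \<and>
     (\<forall>n p. (\<forall>i<n. p i \<in> A) \<longrightarrow>
        0 \<le> (\<Sum>i<n. min (dist (fst (p i)) (snd (p (Suc i mod n))) - \<gamma> * dist (fst (p i)) (snd (p i)))
                          (dist (snd (p i)) (snd (p (Suc i mod n))))))"

definition cyc_mono :: "('a::metric_space \<times> 'a) set \<Rightarrow> bool" where
  "cyc_mono A \<longleftrightarrow> A \<subseteq> tildeM \<and>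
     (\<forall>n p. (\<forall>i<n. p i \<in> A) \<longrightarrow>
        (\<Sum>i<n. dist (fst (p i)) (snd (p i))) \<le> (\<Sum>i<n. dist (fst (p i)) (snd (p (Suc i mod n)))))"

end

theory Submission
  imports Defs
begin

text \<open>
  A set of pairs is \<open>\<gamma>\<close>-cyclically monotonic exactly when some 1-Lipschitz potential \<open>f\<close> is
  \<open>\<gamma>\<close>-steep on it, i.e. \<open>f x - f y \<ge> \<gamma> d(x, y)\<close> on every pair (Rockafellar's construction).

  If \<open>Lip\<^sub>0(M)\<close> has the \<open>w\<^sup>*\<close>-LD2P and \<open>A\<close> is cyclically monotonic, the mean of the normalised
  molecules \<open>(\<delta>\<^sub>x - \<delta>\<^sub>y) / d(x, y)\<close>, \<open>(x, y) \<in> A\<close>, is normed by a potential; every function in a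
  thin slice around it is \<open>\<gamma>\<close>-steep on \<open>A\<close>, and two functions of the slice at distance
  \<open>> 1 + \<gamma>\<close> differ by slope \<open>> 1 + \<gamma>\<close> along some \<open>(u, v)\<close>, so one is steep along \<open>(u, v)\<close> and
  the other along \<open>(v, u)\<close>.

  Conversely, a finitely supported element of \<open>F(M)\<close> is a transport plan, and a plan of
  minimal cost has cyclically monotonic support \<open>A\<close> (rerouting along a cycle that violates
  monotonicity would lower the cost) and cost close to the norm. Potentials for
  \<open>A \<union> {(u, v)}\<close> and \<open>A \<union> {(v, u)}\<close> then lie in the slice and are \<open>2\<gamma>\<close> apart.
\<close>

section \<open>Potentials of \<open>\<gamma>\<close>-cyclically monotonic sets\<close>

definition steep_on :: "real \<Rightarrow> ('a::metric_space \<times> 'a) set \<Rightarrow> ('a \<Rightarrow> real) \<Rightarrow> bool" where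
  "steep_on \<gamma> B f \<longleftrightarrow> (\<forall>(x, y)\<in>B. \<gamma> * dist x y \<le> f x - f y)"

lemma steep_on_insert_iff [simp]:
  "steep_on \<gamma> (insert (x, y) A) f \<longleftrightarrow> steep_on \<gamma> A f \<and> \<gamma> * dist x y \<le> f x - f y"
  by (auto simp: steep_on_def)

lemma steep_on_shift: "steep_on \<gamma> A (\<lambda>z. f z - c) \<longleftrightarrow> steep_on \<gamma> A f"
  by (simp add: steep_on_def)

definition weak_gamma_cyc_mono :: "real \<Rightarrow> ('a::metric_space \<times> 'a) set \<Rightarrow> bool" where
  "weak_gamma_cyc_mono \<gamma> B \<longleftrightarrow>
     (\<forall>n p. (\<forall>i<n. p i \<in> B) \<longrightarrow>
        \<gamma> * (\<Sum>i<n. dist (fst (p i)) (snd (p i))) \<le> (\<Sum>i<n. dist (fst (p i)) (snd (p (Suc i mod n)))))"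

lemma abs_diff_le_lipschitz:
  fixes f :: "'a::metric_space \<Rightarrow> real"
  assumes "C-lipschitz_on UNIV f"
  shows "\<bar>f x - f y\<bar> \<le> C * dist x y"
  using lipschitz_onD[OF assms, of x y] by (simp add: dist_real_def)

lemma lipschitz_on_dist_to: "1-lipschitz_on UNIV (\<lambda>z. dist z v)"
  by (rule lipschitz_onI) (use abs_dist_diff_le[of _ v] in \<open>auto simp: dist_real_def dist_commute\<close>)

lemma sum_lessThan_rotate: "(\<Sum>i<n. h (Suc i mod n)) = (\<Sum>i<n. h i :: 'b::comm_monoid_add)"
proof (cases n)
  case (Suc m)
  have "(\<Sum>i<Suc m. h (Suc i mod Suc m)) = h 0 + (\<Sum>i<m. h (Suc i))"
    by (simp add: lessThan_Suc)
  also have "\<dots> = (\<Sum>i<Suc m. h i)"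
    by (rule sum.lessThan_Suc_shift[symmetric])
  finally show ?thesis using Suc by simp
qed simp

lemma gamma_cyc_mono_imp_weak:
  assumes "gamma_cyc_mono \<gamma> B"
  shows "weak_gamma_cyc_mono \<gamma> B"
  unfolding weak_gamma_cyc_mono_def
proof (intro allI impI)
  fix n and p :: "nat \<Rightarrow> 'a \<times> 'a"
  assume "\<forall>i<n. p i \<in> B"
  then have "0 \<le> (\<Sum>i<n. min (dist (fst (p i)) (snd (p (Suc i mod n))) - \<gamma> * dist (fst (p i)) (snd (p i)))
                             (dist (snd (p i)) (snd (p (Suc i mod n)))))"
    using assms unfolding gamma_cyc_mono_def by blast
  also have "\<dots> \<le> (\<Sum>i<n. dist (fst (p i)) (snd (p (Suc i mod n))) - \<gamma> * dist (fst (p i)) (snd (p i)))"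
    by (rule sum_mono) simp
  finally show "\<gamma> * (\<Sum>i<n. dist (fst (p i)) (snd (p i))) \<le> (\<Sum>i<n. dist (fst (p i)) (snd (p (Suc i mod n))))"
    by (simp add: sum_subtractf sum_distrib_left)
qed

lemma cyc_mono_imp_weak: "cyc_mono B \<Longrightarrow> weak_gamma_cyc_mono 1 B"
  unfolding cyc_mono_def weak_gamma_cyc_mono_def by simp

lemma potential_imp_gamma_cyc_mono:
  assumes "B \<subseteq> tildeM" and lip: "1-lipschitz_on UNIV f" and steep: "steep_on \<gamma> B f"
  shows "gamma_cyc_mono \<gamma> B"
  unfolding gamma_cyc_mono_def
proof (intro conjI allI impI)
  show "B \<subseteq> tildeM" by fact
  fix n and p :: "nat \<Rightarrow> 'a \<times> 'a"
  assume pB: "\<forall>i<n. p i \<in> B"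
  have diff_le: "f a - f b \<le> dist a b" for a b
    using abs_diff_le_lipschitz[OF lip, of a b] by (simp add: abs_le_iff)
  have "0 = (\<Sum>i<n. f (snd (p i)) - f (snd (p (Suc i mod n))))"
    using sum_lessThan_rotate[of "\<lambda>i. f (snd (p i))" n] by (simp add: sum_subtractf)
  also have "\<dots> \<le> (\<Sum>i<n. min (dist (fst (p i)) (snd (p (Suc i mod n))) - \<gamma> * dist (fst (p i)) (snd (p i)))
                             (dist (snd (p i)) (snd (p (Suc i mod n)))))"
  proof (rule sum_mono)
    fix i assume "i \<in> {..<n}"
    then have "\<gamma> * dist (fst (p i)) (snd (p i)) \<le> f (fst (p i)) - f (snd (p i))"
      using pB steep by (auto simp: steep_on_def)
    then show "f (snd (p i)) - f (snd (p (Suc i mod n)))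
        \<le> min (dist (fst (p i)) (snd (p (Suc i mod n))) - \<gamma> * dist (fst (p i)) (snd (p i)))
              (dist (snd (p i)) (snd (p (Suc i mod n))))"
      using diff_le[of "fst (p i)" "snd (p (Suc i mod n))"] diff_le[of "snd (p i)" "snd (p (Suc i mod n))"]
      by linarith
  qed
  finally show "0 \<le> \<dots>" .
qed

text \<open>A chain \<open>p 0, \<dots>, p (n - 1)\<close> of pairs \<open>(x\<^sub>i, y\<^sub>i)\<close> from \<open>z\<close> prices the walk
  \<open>z, y\<^sub>0, x\<^sub>0, y\<^sub>1, x\<^sub>1, \<dots>, x\<^sub>n\<^sub>-\<^sub>1, r\<close>, where each jump from \<open>y\<^sub>i\<close> to \<open>x\<^sub>i\<close> earns \<open>\<gamma> d(x\<^sub>i, y\<^sub>i)\<close>;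
  the potential is the infimum over all chains.\<close>

definition chain_start :: "'a \<Rightarrow> (nat \<Rightarrow> 'a \<times> 'a) \<Rightarrow> nat \<Rightarrow> 'a" where
  "chain_start z p i = (if i = 0 then z else fst (p (i - 1)))"

definition chain_cost :: "real \<Rightarrow> 'a::metric_space \<Rightarrow> 'a \<Rightarrow> (nat \<Rightarrow> 'a \<times> 'a) \<Rightarrow> nat \<Rightarrow> real" where
  "chain_cost \<gamma> r z p n =
     (\<Sum>i<n. dist (chain_start z p i) (snd (p i)) - \<gamma> * dist (fst (p i)) (snd (p i)))
     + dist (chain_start z p n) r"

lemma chain_cost_le_dist_add: "chain_cost \<gamma> r z p n \<le> dist z z' + chain_cost \<gamma> r z' p n"
proof (cases n)
  case 0
  then show ?thesis using dist_triangle[of z r z'] by (simp add: chain_cost_def chain_start_def)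
next
  case (Suc m)
  have "chain_start z p (Suc i) = chain_start z' p (Suc i)" for i
    by (simp add: chain_start_def)
  then show ?thesis using Suc dist_triangle[of z "snd (p 0)" z']
    by (simp add: chain_cost_def sum.lessThan_Suc_shift del: sum.lessThan_Suc) (simp add: chain_start_def)
qed

lemma chain_cost_prepend:
  "chain_cost \<gamma> r y (case_nat (x, y) p) (Suc n) = chain_cost \<gamma> r x p n - \<gamma> * dist x y"
proof -
  have "chain_start y (case_nat (x, y) p) (Suc i) = chain_start x p i" for i
    by (cases i) (simp_all add: chain_start_def)
  then show ?thesis
    by (simp add: chain_cost_def sum.lessThan_Suc_shift chain_start_def del: sum.lessThan_Suc)
qed

lemma chain_cost_lower_bound:
  assumes cyc: "weak_gamma_cyc_mono \<gamma> B" and pB: "\<forall>i<n. p i \<in> B"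
  shows "- dist r z \<le> chain_cost \<gamma> r z p n"
proof (cases n)
  case 0
  then show ?thesis by (simp add: chain_cost_def chain_start_def dist_commute)
next
  case (Suc m)
  have closed_cycle: "\<gamma> * (\<Sum>i<Suc m. dist (fst (p i)) (snd (p i)))
      \<le> (\<Sum>i<m. dist (fst (p i)) (snd (p (Suc i)))) + dist (fst (p m)) (snd (p 0))"
  proof -
    have "\<gamma> * (\<Sum>i<Suc m. dist (fst (p i)) (snd (p i)))
        \<le> (\<Sum>i<Suc m. dist (fst (p i)) (snd (p (Suc i mod Suc m))))"
      using cyc pB Suc unfolding weak_gamma_cyc_mono_def by blast
    then show ?thesis by (simp add: lessThan_Suc)
  qed
  have "dist (fst (p m)) (snd (p 0)) \<le> dist (fst (p m)) r + dist r z + dist z (snd (p 0))"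
    using dist_triangle[of "fst (p m)" "snd (p 0)" r] dist_triangle[of r "snd (p 0)" z] by linarith
  moreover have "chain_cost \<gamma> r z p n = dist z (snd (p 0)) + (\<Sum>i<m. dist (fst (p i)) (snd (p (Suc i))))
      - \<gamma> * (\<Sum>i<Suc m. dist (fst (p i)) (snd (p i))) + dist (fst (p m)) r"
    using Suc by (simp add: chain_cost_def chain_start_def sum_subtractf sum_distrib_left distrib_left
        sum.lessThan_Suc_shift del: sum.lessThan_Suc)
  ultimately show ?thesis using closed_cycle by linarith
qed

lemma weak_gamma_cyc_mono_imp_potential:
  assumes cyc: "weak_gamma_cyc_mono \<gamma> B"
  shows "\<exists>f. 1-lipschitz_on UNIV f \<and> steep_on \<gamma> B f"
proof -
  fix r :: 'a
  define costs where "costs z = {chain_cost \<gamma> r z p n | p n. \<forall>i<n. p i \<in> B}" for z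
  define f where "f z = Inf (costs z)" for z
  have costs_ne: "costs z \<noteq> {}" for z
    unfolding costs_def by blast
  have bdd: "bdd_below (costs z)" for z
    using chain_cost_lower_bound[OF cyc] unfolding costs_def by (intro bdd_belowI) blast
  have f_le: "f z \<le> chain_cost \<gamma> r z p n" if "\<forall>i<n. p i \<in> B" for z p n
    unfolding f_def using that by (intro cInf_lower[OF _ bdd]) (auto simp: costs_def)
  have f_ge: "c \<le> f z" if "\<And>p n. \<forall>i<n. p i \<in> B \<Longrightarrow> c \<le> chain_cost \<gamma> r z p n" for c z
    unfolding f_def using that by (intro cInf_greatest[OF costs_ne]) (auto simp: costs_def)
  have f_diff_le: "f z - f z' \<le> dist z z'" for z z'
  proof -
    have "f z - dist z z' \<le> chain_cost \<gamma> r z' p n" if "\<forall>i<n. p i \<in> B" for p n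
      using f_le[OF that, of z] chain_cost_le_dist_add[of \<gamma> r z p n z'] by linarith
    then show ?thesis using f_ge[of "f z - dist z z'" z'] by simp
  qed
  have "1-lipschitz_on UNIV f"
    using f_diff_le by (intro lipschitz_onI) (auto simp: dist_real_def abs_le_iff, metis dist_commute)
  moreover have "steep_on \<gamma> B f"
    unfolding steep_on_def
  proof (intro ballI, clarify)
    fix x y assume xy: "(x, y) \<in> B"
    have "f y + \<gamma> * dist x y \<le> chain_cost \<gamma> r x p n" if "\<forall>i<n. p i \<in> B" for p n
    proof -
      have "\<forall>i<Suc n. case_nat (x, y) p i \<in> B"
        using that xy by (auto simp: less_Suc_eq_0_disj)
      then show ?thesis
        using f_le[of "Suc n" "case_nat (x, y) p" y] chain_cost_prepend[of \<gamma> r y x p n] by simp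
    qed
    then show "\<gamma> * dist x y \<le> f x - f y"
      using f_ge[of "f y + \<gamma> * dist x y" x] by simp
  qed
  ultimately show ?thesis by blast
qed

lemma gamma_cyc_mono_iff_potential:
  "gamma_cyc_mono \<gamma> B \<longleftrightarrow> B \<subseteq> tildeM \<and> (\<exists>f. 1-lipschitz_on UNIV f \<and> steep_on \<gamma> B f)"
proof
  assume "gamma_cyc_mono \<gamma> B"
  then show "B \<subseteq> tildeM \<and> (\<exists>f. 1-lipschitz_on UNIV f \<and> steep_on \<gamma> B f)"
    using gamma_cyc_mono_imp_weak[THEN weak_gamma_cyc_mono_imp_potential]
    by (simp add: gamma_cyc_mono_def)
qed (blast intro: potential_imp_gamma_cyc_mono)

section \<open>The unit ball of \<open>Lip\<^sub>0(M)\<close>\<close>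

lemma lipnorm_le:
  fixes h :: "'a::metric_space \<Rightarrow> real"
  assumes "\<exists>u v::'a. u \<noteq> v" and "C-lipschitz_on UNIV h"
  shows "lipnorm h \<le> C"
  unfolding lipnorm_def
proof (rule cSup_least)
  show "{\<bar>h x - h y\<bar> / dist x y |x y. x \<noteq> y} \<noteq> {}" using assms(1) by blast
next
  fix s assume "s \<in> {\<bar>h x - h y\<bar> / dist x y |x y. x \<noteq> y}"
  then obtain x y where s: "s = \<bar>h x - h y\<bar> / dist x y" and "x \<noteq> y" by blast
  have "\<bar>h x - h y\<bar> \<le> C * dist x y"
    by (rule abs_diff_le_lipschitz[OF assms(2)])
  then show "s \<le> C"
    using \<open>x \<noteq> y\<close> by (simp add: s pos_divide_le_eq)
qed

lemma slope_le_lipnorm: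
  assumes "C-lipschitz_on UNIV h" and "x \<noteq> y"
  shows "\<bar>h x - h y\<bar> / dist x y \<le> lipnorm h"
  unfolding lipnorm_def
proof (rule cSup_upper)
  show "\<bar>h x - h y\<bar> / dist x y \<in> {\<bar>h x - h y\<bar> / dist x y |x y. x \<noteq> y}"
    using assms(2) by blast
  show "bdd_above {\<bar>h x - h y\<bar> / dist x y |x y. x \<noteq> y}"
  proof (rule bdd_aboveI)
    fix s assume "s \<in> {\<bar>h x - h y\<bar> / dist x y |x y. x \<noteq> y}"
    then obtain u v where s: "s = \<bar>h u - h v\<bar> / dist u v" and "u \<noteq> v" by blast
    have "\<bar>h u - h v\<bar> \<le> C * dist u v"
      by (rule abs_diff_le_lipschitz[OF assms(1)])
    then show "s \<le> C"
      using \<open>u \<noteq> v\<close> by (simp add: s pos_divide_le_eq)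
  qed
qed

lemma lipnorm_gtE:
  fixes h :: "'a::metric_space \<Rightarrow> real"
  assumes "\<exists>u v::'a. u \<noteq> v" and "c < lipnorm h"
  obtains x y where "x \<noteq> y" and "c * dist x y < \<bar>h x - h y\<bar>"
proof -
  have "{\<bar>h x - h y\<bar> / dist x y |x y. x \<noteq> y} \<noteq> {}"
    using assms(1) by blast
  then have "\<exists>s\<in>{\<bar>h x - h y\<bar> / dist x y |x y. x \<noteq> y}. c < s"
    using assms(2) unfolding lipnorm_def by (rule less_cSupD)
  then obtain x y where "x \<noteq> y" and "c < \<bar>h x - h y\<bar> / dist x y"
    by blast
  then show ?thesis using that by (simp add: pos_less_divide_eq)
qed

text \<open>On a one-point space \<open>lipnorm\<close> is the supremum of the empty set, hence the
  hypothesis that \<open>M\<close> has two points.\<close>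

lemma LipBall_iff:
  fixes x0 :: "'a::metric_space"
  assumes "\<exists>u v::'a. u \<noteq> v"
  shows "f \<in> LipBall x0 \<longleftrightarrow> f x0 = 0 \<and> 1-lipschitz_on UNIV f"
proof
  assume f: "f \<in> LipBall x0"
  then obtain C where C: "C-lipschitz_on UNIV f" and "f x0 = 0" and norm: "lipnorm f \<le> 1"
    unfolding LipBall_def Lip0_def by auto
  moreover have "dist (f x) (f y) \<le> 1 * dist x y" for x y
  proof (cases "x = y")
    case False
    then have "\<bar>f x - f y\<bar> / dist x y \<le> 1"
      using slope_le_lipnorm[OF C] norm by (meson order_trans)
    then show ?thesis using False by (simp add: divide_le_eq dist_real_def)
  qed simp
  ultimately show "f x0 = 0 \<and> 1-lipschitz_on UNIV f"
    by (auto intro: lipschitz_onI)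
next
  assume "f x0 = 0 \<and> 1-lipschitz_on UNIV f"
  then show "f \<in> LipBall x0"
    using lipnorm_le[OF assms] unfolding LipBall_def Lip0_def by blast
qed

lemma shift_mem_LipBall:
  fixes x0 :: "'a::metric_space"
  assumes "\<exists>u v::'a. u \<noteq> v" and "1-lipschitz_on UNIV f"
  shows "(\<lambda>z. f z - f x0) \<in> LipBall x0"
proof -
  have "1-lipschitz_on UNIV (\<lambda>z. f z - f x0)"
    using lipschitz_on_diff[OF assms(2) lipschitz_on_constant] by simp
  then show ?thesis by (simp add: LipBall_iff[OF assms(1)])
qed

lemma lipnorm_diff_LipBall_le:
  fixes x0 :: "'a::metric_space"
  assumes "\<exists>u v::'a. u \<noteq> v" and "f \<in> LipBall x0" and "g \<in> LipBall x0"
  shows "lipnorm (f - g) \<le> 2"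
proof -
  have "(1 + 1)-lipschitz_on UNIV (\<lambda>x. f x - g x)"
    using assms by (intro lipschitz_on_diff) (simp_all add: LipBall_iff)
  then show ?thesis using lipnorm_le[OF assms(1)] by (simp add: fun_diff_def)
qed

section \<open>Transport plans\<close>

definition plan_eval :: "('a \<times> 'a) set \<Rightarrow> ('a \<times> 'a \<Rightarrow> real) \<Rightarrow> ('a \<Rightarrow> real) \<Rightarrow> real" where
  "plan_eval Q c f = (\<Sum>q\<in>Q. c q * (f (fst q) - f (snd q)))"

definition plan_cost :: "('a::metric_space \<times> 'a) set \<Rightarrow> ('a \<times> 'a \<Rightarrow> real) \<Rightarrow> real" where
  "plan_cost Q c = (\<Sum>q\<in>Q. c q * dist (fst q) (snd q))"

lemma abs_plan_eval_le_cost: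
  assumes "\<forall>q\<in>A. 0 \<le> c q" and "1-lipschitz_on UNIV f"
  shows "\<bar>plan_eval A c f\<bar> \<le> plan_cost A c"
  unfolding plan_eval_def plan_cost_def
proof (rule order_trans[OF sum_abs sum_mono])
  fix q assume "q \<in> A"
  then show "\<bar>c q * (f (fst q) - f (snd q))\<bar> \<le> c q * dist (fst q) (snd q)"
    using assms abs_diff_le_lipschitz[OF assms(2), of "fst q" "snd q"]
    by (simp add: abs_mult mult_left_mono)
qed

lemma plan_eval_ge_cost_if_steep:
  assumes "\<forall>q\<in>A. 0 \<le> c q" and "steep_on \<gamma> A f"
  shows "\<gamma> * plan_cost A c \<le> plan_eval A c f"
  unfolding plan_eval_def plan_cost_def sum_distrib_left
proof (rule sum_mono)
  fix q assume "q \<in> A"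
  then have "\<gamma> * dist (fst q) (snd q) \<le> f (fst q) - f (snd q)"
    using assms(2) by (auto simp: steep_on_def)
  then show "\<gamma> * (c q * dist (fst q) (snd q)) \<le> c q * (f (fst q) - f (snd q))"
    using assms(1) \<open>q \<in> A\<close> by (metis mult.left_commute mult_left_mono)
qed

lemma plan_eval_eq_molecule:
  assumes "finite A"
  obtains S a where "finite S" and "plan_eval A c = molecule S a"
proof
  define S where "S = fst ` A \<union> snd ` A"
  define a where "a z = (\<Sum>q\<in>A. c q * ((if fst q = z then 1 else 0) - (if snd q = z then 1 else 0)))" for z
  show "finite S" using assms by (simp add: S_def)
  show "plan_eval A c = molecule S a"
  proof
    fix f :: "'a \<Rightarrow> real"
    have "molecule S a f = (\<Sum>q\<in>A. \<Sum>z\<in>S. c q * ((if fst q = z then f z else 0) - (if snd q = z then f z else 0)))"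
      unfolding molecule_def a_def sum_distrib_right
      by (subst sum.swap) (intro sum.cong refl, simp add: algebra_simps)
    also have "\<dots> = plan_eval A c f"
      using \<open>finite S\<close> unfolding plan_eval_def
      by (intro sum.cong refl) (auto simp: S_def sum_subtractf sum_distrib_left[symmetric])
    finally show "plan_eval A c f = molecule S a f" ..
  qed
qed

lemma plan_eval_add_scaled: "plan_eval Q (\<lambda>q. c q + t * s q) f = plan_eval Q c f + t * plan_eval Q s f"
  by (simp add: plan_eval_def distrib_right sum.distrib sum_distrib_left mult.assoc)

lemma plan_cost_add_scaled: "plan_cost Q (\<lambda>q. c q + t * s q) = plan_cost Q c + t * plan_cost Q s"
  by (simp add: plan_cost_def distrib_right sum.distrib sum_distrib_left mult.assoc)

section \<open>From the \<open>w\<^sup>*\<close>-LD2P to one-point extensions\<close>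

lemma gamma_cyc_mono_insert_steep:
  assumes "1-lipschitz_on UNIV f" and "A \<subseteq> tildeM" and "steep_on \<gamma> A f"
    and "x \<noteq> y" and "\<gamma> * dist x y \<le> f x - f y"
  shows "gamma_cyc_mono \<gamma> (A \<union> {(x, y)})"
  using assms by (auto simp: gamma_cyc_mono_iff_potential tildeM_def)

lemma steep_pair_of_large_slope:
  assumes f: "1-lipschitz_on UNIV f" and g: "1-lipschitz_on UNIV g" and "x \<noteq> y"
    and large: "(1 + \<gamma>) * dist x y < \<bar>(f - g) x - (f - g) y\<bar>"
  obtains u v where "u \<noteq> v" and "\<gamma> * dist u v \<le> f u - f v" and "\<gamma> * dist u v \<le> g v - g u"
proof -
  have bounds: "\<bar>f x - f y\<bar> \<le> dist x y" "\<bar>g x - g y\<bar> \<le> dist x y"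
    using abs_diff_le_lipschitz[OF f, of x y] abs_diff_le_lipschitz[OF g, of x y] by simp_all
  show ?thesis
  proof (cases "0 \<le> (f - g) x - (f - g) y")
    case True
    then show ?thesis
      using that[of x y] \<open>x \<noteq> y\<close> bounds large
      by (simp add: abs_le_iff algebra_simps)
  next
    case False
    then show ?thesis
      using that[of y x] \<open>x \<noteq> y\<close> bounds large
      by (simp add: abs_le_iff algebra_simps dist_commute)
  qed
qed

definition mean_slope :: "('a::metric_space \<times> 'a) set \<Rightarrow> ('a \<Rightarrow> real) \<Rightarrow> real" where
  "mean_slope A f = (\<Sum>q\<in>A. (f (fst q) - f (snd q)) / dist (fst q) (snd q)) / card A"

lemma mean_slope_in_free_space:
  assumes "finite A"
  shows "in_free_space x0 (mean_slope A)"
proof -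
  have "mean_slope A = plan_eval A (\<lambda>q. 1 / (card A * dist (fst q) (snd q)))"
    unfolding mean_slope_def plan_eval_def sum_divide_distrib fun_eq_iff
    by (intro allI sum.cong) simp_all
  moreover obtain S a where "finite S" and "plan_eval A (\<lambda>q. 1 / (card A * dist (fst q) (snd q))) = molecule S a"
    using plan_eval_eq_molecule[OF assms] .
  ultimately show ?thesis
    unfolding in_free_space_def by (intro allI impI exI[of _ S] exI[of _ a]) simp
qed

lemma abs_slope_le_one:
  assumes "1-lipschitz_on UNIV f"
  shows "\<bar>(f x - f y) / dist x y\<bar> \<le> 1"
  using abs_diff_le_lipschitz[OF assms, of x y]
  by (cases "x = y") (simp_all add: abs_divide)

lemma abs_mean_slope_le_one:
  assumes "1-lipschitz_on UNIV f"
  shows "\<bar>mean_slope A f\<bar> \<le> 1"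
proof -
  have "\<bar>\<Sum>q\<in>A. (f (fst q) - f (snd q)) / dist (fst q) (snd q)\<bar>
      \<le> (\<Sum>q\<in>A. \<bar>(f (fst q) - f (snd q)) / dist (fst q) (snd q)\<bar>)"
    by (rule sum_abs)
  also have "\<dots> \<le> real (card A) * 1"
    by (rule sum_bounded_above) (rule abs_slope_le_one[OF assms])
  finally show ?thesis
    by (cases "card A = 0") (simp_all add: mean_slope_def abs_divide divide_le_eq)
qed

lemma mean_slope_eq_one:
  assumes "A \<subseteq> tildeM" and "A \<noteq> {}" and "finite A"
    and lip: "1-lipschitz_on UNIV f" and steep: "steep_on 1 A f"
  shows "mean_slope A f = 1"
proof -
  have slope: "(f x - f y) / dist x y = 1" if "(x, y) \<in> A" for x y
  proof -
    have "dist x y \<le> f x - f y" using steep that by (auto simp: steep_on_def)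
    moreover have "f x - f y \<le> dist x y"
      using abs_diff_le_lipschitz[OF lip, of x y] by (simp add: abs_le_iff)
    ultimately have "f x - f y = dist x y" by linarith
    moreover have "x \<noteq> y" using assms(1) that by (auto simp: tildeM_def)
    ultimately show ?thesis by simp
  qed
  have "(\<Sum>q\<in>A. (f (fst q) - f (snd q)) / dist (fst q) (snd q)) = (\<Sum>q\<in>A. 1)"
    by (intro sum.cong refl) (metis prod.collapse slope)
  then show ?thesis
    using assms(2,3) by (simp add: mean_slope_def)
qed

lemma cyc_mono_mean_slope_attains_one:
  fixes x0 :: "'a::metric_space"
  assumes "\<exists>u v::'a. u \<noteq> v" and "finite A" and "A \<noteq> {}" and "cyc_mono A"
  obtains F where "F \<in> LipBall x0" and "mean_slope A F = 1"
proof -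
  obtain f where f: "1-lipschitz_on UNIV f" "steep_on 1 A f"
    using weak_gamma_cyc_mono_imp_potential[OF cyc_mono_imp_weak[OF assms(4)]] by blast
  have "1-lipschitz_on UNIV (\<lambda>z. f z - f x0)"
    using lipschitz_on_diff[OF f(1) lipschitz_on_constant] by simp
  moreover have "A \<subseteq> tildeM" using assms(4) by (simp add: cyc_mono_def)
  ultimately have "mean_slope A (\<lambda>z. f z - f x0) = 1"
    using assms(2,3) f(2) by (intro mean_slope_eq_one) (simp_all add: steep_on_shift)
  then show ?thesis using that shift_mem_LipBall[OF assms(1) f(1)] by blast
qed

lemma mean_slope_large_imp_steep:
  assumes "A \<subseteq> tildeM" and "finite A" and "1-lipschitz_on UNIV f"
    and large: "1 - (1 - \<gamma>) / card A < mean_slope A f"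
  shows "steep_on \<gamma> A f"
  unfolding steep_on_def
proof (intro ballI, clarify)
  fix x y assume xy: "(x, y) \<in> A"
  define t where "t q = (f (fst q) - f (snd q)) / dist (fst q) (snd q)" for q
  have "A \<noteq> {}" using xy by blast
  then have N: "0 < real (card A)" using assms(2) by (simp add: card_gt_0_iff)
  have "real (card A) - (1 - \<gamma>) = real (card A) * (1 - (1 - \<gamma>) / card A)"
    using N by (simp add: field_simps)
  also have "\<dots> < real (card A) * mean_slope A f"
    using large N by (rule mult_strict_left_mono)
  also have "\<dots> = sum t A"
    using N by (simp add: mean_slope_def t_def)
  also have "sum t A = t (x, y) + sum t (A - {(x, y)})"
    using assms(2) xy by (rule sum.remove)
  also have "sum t (A - {(x, y)}) \<le> real (card (A - {(x, y)})) * 1"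
    unfolding t_def by (intro sum_bounded_above abs_le_D1[OF abs_slope_le_one[OF assms(3)]])
  also have "\<dots> = real (card A) - 1"
    using assms(2) xy N by (simp add: of_nat_diff)
  finally have "\<gamma> < t (x, y)" by simp
  moreover have "0 < dist x y" using xy assms(1) by (auto simp: tildeM_def)
  ultimately show "\<gamma> * dist x y \<le> f x - f y"
    by (simp add: t_def pos_less_divide_eq)
qed

lemma dual_norm_eq_oneI:
  assumes "\<forall>f\<in>LipBall x0. \<bar>\<mu> f\<bar> \<le> 1" and "F \<in> LipBall x0" and "\<mu> F = 1"
  shows "dual_norm x0 \<mu> = 1"
  unfolding dual_norm_def by (rule cSup_eq_maximum) (use assms in force)+

lemma lip_diam_gtE:
  assumes "c < lip_diam F" and "F \<noteq> {}"
  obtains f g where "f \<in> F" and "g \<in> F" and "c < lipnorm (f - g)"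
proof -
  have "{lipnorm (f - g) |f g. f \<in> F \<and> g \<in> F} \<noteq> {}" using assms(2) by blast
  then have "\<exists>d\<in>{lipnorm (f - g) |f g. f \<in> F \<and> g \<in> F}. c < d"
    using assms(1) unfolding lip_diam_def by (rule less_cSupD)
  then show ?thesis using that by blast
qed

lemma wstar_LD2P_imp_extension:
  fixes x0 :: "'a::metric_space" and A :: "('a \<times> 'a) set"
  assumes ex: "\<exists>u v::'a. u \<noteq> v" and LD: "wstar_LD2P x0"
    and "finite A" and "cyc_mono A" and "0 < \<gamma>" and "\<gamma> < 1"
  shows "\<exists>u v. u \<noteq> v \<and> gamma_cyc_mono \<gamma> (A \<union> {(u, v)}) \<and> gamma_cyc_mono \<gamma> (A \<union> {(v, u)})"
proof (cases "A = {}")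
  case True
  obtain u v :: 'a where "u \<noteq> v" using ex by blast
  have le: "\<gamma> * dist a b \<le> dist a b" for a b :: 'a
    using \<open>0 < \<gamma>\<close> \<open>\<gamma> < 1\<close> by (intro mult_left_le_one_le) auto
  have "gamma_cyc_mono \<gamma> (A \<union> {(u, v)})"
    using gamma_cyc_mono_insert_steep[OF lipschitz_on_dist_to[of v], of A \<gamma> u v] True \<open>u \<noteq> v\<close> le
    by (simp add: steep_on_def)
  moreover have "gamma_cyc_mono \<gamma> (A \<union> {(v, u)})"
    using gamma_cyc_mono_insert_steep[OF lipschitz_on_dist_to[of u], of A \<gamma> v u] True \<open>u \<noteq> v\<close> le
    by (simp add: steep_on_def)
  ultimately show ?thesis using \<open>u \<noteq> v\<close> by blast
next
  case False
  have A: "A \<subseteq> tildeM" using \<open>cyc_mono A\<close> by (simp add: cyc_mono_def)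
  define \<alpha> where "\<alpha> = (1 - \<gamma>) / card A"
  define slice where "slice = wstar_slice x0 (mean_slope A) \<alpha>"
  have "0 < \<alpha>"
    using \<open>\<gamma> < 1\<close> \<open>finite A\<close> False by (simp add: \<alpha>_def card_gt_0_iff)
  obtain F where F: "F \<in> LipBall x0" "mean_slope A F = 1"
    using cyc_mono_mean_slope_attains_one[OF ex \<open>finite A\<close> False \<open>cyc_mono A\<close>] .
  have "dual_norm x0 (mean_slope A) = 1"
    using abs_mean_slope_le_one F by (intro dual_norm_eq_oneI) (auto simp: LipBall_iff[OF ex])
  then have "lip_diam slice = 2"
    using LD mean_slope_in_free_space[OF \<open>finite A\<close>] \<open>0 < \<alpha>\<close>
    unfolding wstar_LD2P_def slice_def by blast
  moreover have "F \<in> slice"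
    using F \<open>0 < \<alpha>\<close> by (simp add: slice_def wstar_slice_def)
  ultimately obtain f g where "f \<in> slice" "g \<in> slice" and large: "1 + \<gamma> < lipnorm (f - g)"
    using lip_diam_gtE[of "1 + \<gamma>" slice] \<open>\<gamma> < 1\<close> by auto
  then have lip: "1-lipschitz_on UNIV f" "1-lipschitz_on UNIV g"
    and steep: "steep_on \<gamma> A f" "steep_on \<gamma> A g"
    using mean_slope_large_imp_steep[OF A \<open>finite A\<close>]
    by (auto simp: slice_def wstar_slice_def LipBall_iff[OF ex] \<alpha>_def)
  obtain x y where "x \<noteq> y" and "(1 + \<gamma>) * dist x y < \<bar>(f - g) x - (f - g) y\<bar>"
    using lipnorm_gtE[OF ex large] .
  then obtain u v where "u \<noteq> v" "\<gamma> * dist u v \<le> f u - f v" "\<gamma> * dist u v \<le> g v - g u"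
    using steep_pair_of_large_slope[OF lip] by blast
  then show ?thesis
    using gamma_cyc_mono_insert_steep[OF lip(1) A steep(1), of u v]
      gamma_cyc_mono_insert_steep[OF lip(2) A steep(2), of v u]
    by (auto simp: dist_commute)
qed

section \<open>Minimal plans have cyclically monotonic support\<close>

text \<open>Moving unit mass from each \<open>(x\<^sub>i, y\<^sub>i)\<close> of a cycle to \<open>(x\<^sub>i, y\<^sub>i\<^sub>+\<^sub>1)\<close> leaves
  \<open>\<Sum> c\<^sub>q (\<delta>\<^sub>x - \<delta>\<^sub>y)\<close> unchanged.\<close>

definition cycle_reroute :: "nat \<Rightarrow> (nat \<Rightarrow> 'a \<times> 'a) \<Rightarrow> 'a \<times> 'a \<Rightarrow> real" where
  "cycle_reroute n p q =
     (\<Sum>i<n. (if q = (fst (p i), snd (p (Suc i mod n))) then 1 else 0) - (if q = p i then 1 else 0))"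

lemma sum_cycle_reroute:
  fixes g :: "'a \<times> 'a \<Rightarrow> real"
  assumes "finite Q" and "0 < n" and pQ: "\<forall>i<n. p i \<in> Q"
    and reroute: "\<And>x y x' y'. (x, y) \<in> Q \<Longrightarrow> (x', y') \<in> Q \<Longrightarrow> x \<noteq> y' \<Longrightarrow> (x, y') \<in> Q"
    and diag: "\<And>x. g (x, x) = 0"
  shows "(\<Sum>q\<in>Q. cycle_reroute n p q * g q) = (\<Sum>i<n. g (fst (p i), snd (p (Suc i mod n))) - g (p i))"
proof -
  have "(\<Sum>q\<in>Q. cycle_reroute n p q * g q)
      = (\<Sum>i<n. (\<Sum>q\<in>Q. if q = (fst (p i), snd (p (Suc i mod n))) then g q else 0)
               - (\<Sum>q\<in>Q. if q = p i then g q else 0))"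
    unfolding cycle_reroute_def sum_distrib_right sum_subtractf[symmetric]
    by (subst sum.swap) (auto simp: left_diff_distrib intro!: sum.cong)
  also have "\<dots> = (\<Sum>i<n. g (fst (p i), snd (p (Suc i mod n))) - g (p i))"
  proof (intro sum.cong refl)
    fix i assume "i \<in> {..<n}"
    then have "p i \<in> Q" and "p (Suc i mod n) \<in> Q"
      using pQ \<open>0 < n\<close> by auto
    then have "(fst (p i), snd (p (Suc i mod n))) \<in> Q \<or> fst (p i) = snd (p (Suc i mod n))"
      using reroute by (metis prod.collapse)
    then show "(\<Sum>q\<in>Q. if q = (fst (p i), snd (p (Suc i mod n))) then g q else 0)
        - (\<Sum>q\<in>Q. if q = p i then g q else 0) = g (fst (p i), snd (p (Suc i mod n))) - g (p i)"
      using \<open>p i \<in> Q\<close> diag by (auto simp: sum.delta[OF \<open>finite Q\<close>])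
  qed
  finally show ?thesis .
qed

lemma cycle_reroute_lower_bounds:
  shows "- real n \<le> cycle_reroute n p q"
    and "q \<notin> p ` {..<n} \<Longrightarrow> 0 \<le> cycle_reroute n p q"
proof -
  have "real (card {..<n}) * (- 1) \<le> cycle_reroute n p q"
    unfolding cycle_reroute_def by (rule sum_bounded_below) auto
  then show "- real n \<le> cycle_reroute n p q" by simp
  show "0 \<le> cycle_reroute n p q" if "q \<notin> p ` {..<n}"
    unfolding cycle_reroute_def using that by (intro sum_nonneg) auto
qed

lemma plan_reroute_cycle:
  fixes Q :: "('a::metric_space \<times> 'a) set"
  assumes "finite Q"
    and reroute: "\<And>x y x' y'. (x, y) \<in> Q \<Longrightarrow> (x', y') \<in> Q \<Longrightarrow> x \<noteq> y' \<Longrightarrow> (x, y') \<in> Q"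
    and nonneg: "\<forall>q\<in>Q. 0 \<le> c q" and "0 < n" and p: "\<forall>i<n. p i \<in> Q \<and> 0 < c (p i)"
  obtains c' t where "0 < t" and "\<forall>q\<in>Q. 0 \<le> c' q" and "plan_eval Q c' = plan_eval Q c"
    and "plan_cost Q c' = plan_cost Q c + t * ((\<Sum>i<n. dist (fst (p i)) (snd (p (Suc i mod n))))
                                              - (\<Sum>i<n. dist (fst (p i)) (snd (p i))))"
proof -
  define m where "m = Min (c ` p ` {..<n})"
  define c' where "c' = (\<lambda>q. c q + m / n * cycle_reroute n p q)"
  have sum: "(\<Sum>q\<in>Q. cycle_reroute n p q * g q) = (\<Sum>i<n. g (fst (p i), snd (p (Suc i mod n))) - g (p i))"
    if "\<And>x. g (x, x) = 0" for g
    using p that by (intro sum_cycle_reroute[OF \<open>finite Q\<close> \<open>0 < n\<close> _ reroute]) auto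
  have "0 < m"
    unfolding m_def using p \<open>0 < n\<close> by (subst Min_gr_iff) auto
  then have "0 < m / n" using \<open>0 < n\<close> by simp
  moreover have "0 \<le> c' q" if "q \<in> Q" for q
  proof (cases "q \<in> p ` {..<n}")
    case True
    then have "m \<le> c q"
      unfolding m_def by (intro Min_le) auto
    moreover have "m * (- real n) \<le> m * cycle_reroute n p q"
      using \<open>0 < m\<close> cycle_reroute_lower_bounds(1)[of n p q] by (intro mult_left_mono) auto
    then have "- m \<le> m / n * cycle_reroute n p q"
      using \<open>0 < n\<close> by (simp add: field_simps)
    ultimately show ?thesis by (simp add: c'_def)
  next
    case False
    then show ?thesis
      using cycle_reroute_lower_bounds(2)[of q p n] nonneg that \<open>0 < m\<close> by (simp add: c'_def)
  qed
  moreover have "plan_eval Q c' = plan_eval Q c"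
  proof
    fix f :: "'a \<Rightarrow> real"
    have "plan_eval Q (cycle_reroute n p) f = (\<Sum>i<n. f (snd (p i)) - f (snd (p (Suc i mod n))))"
      using sum[of "\<lambda>q. f (fst q) - f (snd q)"] by (simp add: plan_eval_def mult.commute)
    also have "\<dots> = 0"
      using sum_lessThan_rotate[of "\<lambda>i. f (snd (p i))" n] by (simp add: sum_subtractf)
    finally show "plan_eval Q c' f = plan_eval Q c f"
      unfolding c'_def plan_eval_add_scaled by simp
  qed
  moreover have "plan_cost Q c' = plan_cost Q c + m / n * ((\<Sum>i<n. dist (fst (p i)) (snd (p (Suc i mod n))))
                                                        - (\<Sum>i<n. dist (fst (p i)) (snd (p i))))"
    using sum[of "\<lambda>q. dist (fst q) (snd q)"] unfolding c'_def plan_cost_add_scaled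
    by (simp add: plan_cost_def sum_subtractf mult.commute)
  ultimately show ?thesis using that by blast
qed

lemma min_cost_plan_support_cyc_mono:
  fixes Q :: "('a::metric_space \<times> 'a) set"
  assumes "finite Q" and "Q \<subseteq> tildeM"
    and reroute: "\<And>x y x' y'. (x, y) \<in> Q \<Longrightarrow> (x', y') \<in> Q \<Longrightarrow> x \<noteq> y' \<Longrightarrow> (x, y') \<in> Q"
    and nonneg: "\<forall>q\<in>Q. 0 \<le> c q"
    and min: "\<And>c'. \<forall>q\<in>Q. 0 \<le> c' q \<Longrightarrow> plan_eval Q c' = plan_eval Q c \<Longrightarrow> plan_cost Q c \<le> plan_cost Q c'"
  shows "cyc_mono {q \<in> Q. 0 < c q}"
  unfolding cyc_mono_def
proof (intro conjI allI impI)
  show "{q \<in> Q. 0 < c q} \<subseteq> tildeM" using assms(2) by blast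
  fix n and p :: "nat \<Rightarrow> 'a \<times> 'a"
  assume p: "\<forall>i<n. p i \<in> {q \<in> Q. 0 < c q}"
  show "(\<Sum>i<n. dist (fst (p i)) (snd (p i))) \<le> (\<Sum>i<n. dist (fst (p i)) (snd (p (Suc i mod n))))"
  proof (rule ccontr)
    assume shorter: "\<not> ?thesis"
    then have "0 < n" by (cases n) auto
    have p': "\<forall>i<n. p i \<in> Q \<and> 0 < c (p i)" using p by blast
    obtain c' t where "0 < t" "\<forall>q\<in>Q. 0 \<le> c' q" "plan_eval Q c' = plan_eval Q c"
      and cost: "plan_cost Q c' = plan_cost Q c + t * ((\<Sum>i<n. dist (fst (p i)) (snd (p (Suc i mod n))))
                                                      - (\<Sum>i<n. dist (fst (p i)) (snd (p i))))"
      by (rule plan_reroute_cycle[OF \<open>finite Q\<close> reroute nonneg \<open>0 < n\<close> p'])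
    moreover have "t * ((\<Sum>i<n. dist (fst (p i)) (snd (p (Suc i mod n))))
                        - (\<Sum>i<n. dist (fst (p i)) (snd (p i)))) < 0"
      using \<open>0 < t\<close> shorter by (intro mult_pos_neg) simp_all
    ultimately show False
      using min[of c'] by linarith
  qed
qed

lemma compact_plan_set:
  assumes "\<And>q. compact (interval q)"
  shows "compact (PiE UNIV interval \<inter> {c. plan_eval Q c = e} \<inter> {c. plan_cost Q c \<le> K})"
proof -
  have cont: "continuous_on UNIV (\<lambda>c. \<Sum>q\<in>Q. c q * g q)" for g :: "'a \<times> 'a \<Rightarrow> real"
    by (intro continuous_intros continuous_on_product_coordinates)
  have "compactin (product_topology (\<lambda>_. euclidean) UNIV) (PiE UNIV interval)"
    using assms by (subst compactin_PiE) auto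
  then have "compact (PiE UNIV interval)"
    by (simp add: euclidean_product_topology)
  moreover have "closed {c. plan_eval Q c = e}"
    unfolding fun_eq_iff plan_eval_def
    by (intro closed_Collect_all closed_Collect_eq cont continuous_on_const)
  moreover have "closed {c. plan_cost Q c \<le> K}"
    unfolding plan_cost_def by (intro closed_Collect_le cont continuous_on_const)
  ultimately show ?thesis
    by (intro compact_Int_closed closed_Int)
qed

lemma min_cost_plan_exists:
  fixes Q :: "('a::metric_space \<times> 'a) set"
  assumes "finite Q" and "Q \<subseteq> tildeM" and "\<forall>q\<in>Q. 0 \<le> c0 q"
  obtains c where "\<forall>q\<in>Q. 0 \<le> c q" and "plan_eval Q c = plan_eval Q c0"
    and "\<And>c'. \<forall>q\<in>Q. 0 \<le> c' q \<Longrightarrow> plan_eval Q c' = plan_eval Q c0 \<Longrightarrow> plan_cost Q c \<le> plan_cost Q c'"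
proof -
  define K where "K = plan_cost Q c0"
  define interval where "interval q = (if q \<in> Q then {0..K / dist (fst q) (snd q)} else {0})" for q
  define C where "C = PiE UNIV interval \<inter> {c. plan_eval Q c = plan_eval Q c0} \<inter> {c. plan_cost Q c \<le> K}"
  define restr where "restr c q = (if q \<in> Q then c q else 0)" for c :: "'a \<times> 'a \<Rightarrow> real" and q
  have "compact C"
    unfolding C_def by (rule compact_plan_set) (simp add: interval_def)
  have restr_eq: "plan_eval Q (restr c) = plan_eval Q c" "plan_cost Q (restr c) = plan_cost Q c" for c
    by (auto simp: plan_eval_def plan_cost_def restr_def fun_eq_iff intro!: sum.cong)
  have restr_mem: "restr c \<in> C"
    if "\<forall>q\<in>Q. 0 \<le> c q" "plan_eval Q c = plan_eval Q c0" "plan_cost Q c \<le> K" for c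
  proof -
    have "restr c q \<in> interval q" for q
    proof (cases "q \<in> Q")
      case True
      have "c q * dist (fst q) (snd q) \<le> plan_cost Q c"
        unfolding plan_cost_def using True that(1) \<open>finite Q\<close> by (intro member_le_sum) auto
      moreover have "0 < dist (fst q) (snd q)"
        using True assms(2) by (auto simp: tildeM_def)
      ultimately show ?thesis
        using True that by (simp add: interval_def restr_def pos_le_divide_eq)
    qed (simp add: interval_def restr_def)
    then show ?thesis using that restr_eq by (simp add: C_def PiE_iff)
  qed
  have "C \<noteq> {}"
    using restr_mem[of c0] assms(3) by (auto simp: K_def)
  moreover have "continuous_on C (plan_cost Q)"
    unfolding plan_cost_def by (rule continuous_on_subset[OF _ subset_UNIV])
      (intro continuous_intros continuous_on_product_coordinates)
  ultimately obtain c where "c \<in> C" and c_min: "\<And>c'. c' \<in> C \<Longrightarrow> plan_cost Q c \<le> plan_cost Q c'"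
    using continuous_attains_inf[OF \<open>compact C\<close>] by blast
  show ?thesis
  proof
    show "\<forall>q\<in>Q. 0 \<le> c q" and "plan_eval Q c = plan_eval Q c0"
      using \<open>c \<in> C\<close> by (auto simp: C_def interval_def PiE_iff split: if_splits)
  next
    fix c' assume "\<forall>q\<in>Q. 0 \<le> c' q" and "plan_eval Q c' = plan_eval Q c0"
    then show "plan_cost Q c \<le> plan_cost Q c'"
      using c_min[OF restr_mem] restr_eq \<open>c \<in> C\<close> by (cases "plan_cost Q c' \<le> K") (auto simp: C_def)
  qed
qed

lemma finite_off_diagonal:
  assumes "finite T"
  shows "finite {(x, y) \<in> T \<times> T. x \<noteq> y}"
proof -
  have "{(x, y) \<in> T \<times> T. x \<noteq> y} \<subseteq> T \<times> T" by blast
  moreover have "finite (T \<times> T)" using assms by simp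
  ultimately show ?thesis by (rule finite_subset)
qed

lemma molecule_eq_plan_eval:
  fixes x0 :: "'a::metric_space"
  assumes "finite S" and Q: "Q = {(x, y) \<in> insert x0 S \<times> insert x0 S. x \<noteq> y}"
  obtains c where "\<forall>q\<in>Q. 0 \<le> c q" and "\<And>f. f x0 = 0 \<Longrightarrow> molecule S a f = plan_eval Q c f"
proof -
  define S' where "S' = S - {x0}"
  define r where "r x = (if 0 \<le> a x then (x, x0) else (x0, x))" for x
  define c where "c q = (\<Sum>x\<in>S'. if q = r x then \<bar>a x\<bar> else 0)" for q
  have "finite Q"
    unfolding Q by (rule finite_off_diagonal) (use \<open>finite S\<close> in simp)
  have rQ: "r x \<in> Q" if "x \<in> S'" for x
    using that by (auto simp: Q S'_def r_def)
  have "0 \<le> c q" for q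
    unfolding c_def by (intro sum_nonneg) simp
  moreover have "molecule S a f = plan_eval Q c f" if "f x0 = 0" for f
  proof -
    have "plan_eval Q c f = (\<Sum>x\<in>S'. \<Sum>q\<in>Q. if q = r x then \<bar>a x\<bar> * (f (fst q) - f (snd q)) else 0)"
      unfolding plan_eval_def c_def sum_distrib_right
      by (subst sum.swap) (simp add: if_distrib[of "\<lambda>t. t * _"] cong: if_cong)
    also have "\<dots> = (\<Sum>x\<in>S'. \<bar>a x\<bar> * (f (fst (r x)) - f (snd (r x))))"
      using rQ by (simp add: sum.delta[OF \<open>finite Q\<close>])
    also have "\<dots> = (\<Sum>x\<in>S'. a x * f x)"
      using that by (intro sum.cong refl) (simp add: r_def)
    also have "\<dots> = molecule S a f"
      using that \<open>finite S\<close> unfolding S'_def molecule_def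
      by (intro sum.mono_neutral_left) auto
    finally show ?thesis ..
  qed
  ultimately show ?thesis using that by blast
qed

lemma molecule_eq_cyc_mono_plan:
  fixes x0 :: "'a::metric_space"
  assumes "finite S"
  obtains A c where "finite A" and "cyc_mono A" and "\<forall>q\<in>A. 0 \<le> c q"
    and "\<And>f. f x0 = 0 \<Longrightarrow> molecule S a f = plan_eval A c f"
proof -
  define Q where "Q = {(x, y) \<in> insert x0 S \<times> insert x0 S. x \<noteq> y}"
  have "finite Q"
    unfolding Q_def by (rule finite_off_diagonal) (use assms in simp)
  have "Q \<subseteq> tildeM"
    by (auto simp: Q_def tildeM_def)
  obtain c0 where "\<forall>q\<in>Q. 0 \<le> c0 q" and c0: "\<And>f. f x0 = 0 \<Longrightarrow> molecule S a f = plan_eval Q c0 f"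
    using molecule_eq_plan_eval[OF assms Q_def] by blast
  then obtain c where c: "\<forall>q\<in>Q. 0 \<le> c q" "plan_eval Q c = plan_eval Q c0"
    and min: "\<And>c'. \<forall>q\<in>Q. 0 \<le> c' q \<Longrightarrow> plan_eval Q c' = plan_eval Q c \<Longrightarrow> plan_cost Q c \<le> plan_cost Q c'"
    using min_cost_plan_exists[OF \<open>finite Q\<close> \<open>Q \<subseteq> tildeM\<close>] by metis
  define A where "A = {q \<in> Q. 0 < c q}"
  have "cyc_mono A"
    unfolding A_def using \<open>finite Q\<close> \<open>Q \<subseteq> tildeM\<close> c(1) min
    by (intro min_cost_plan_support_cyc_mono) (auto simp: Q_def)
  moreover have "plan_eval Q c f = plan_eval A c f" for f
    unfolding plan_eval_def A_def using \<open>finite Q\<close> c(1)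
    by (intro sum.mono_neutral_right) (auto simp: less_le)
  ultimately show ?thesis
    using that[of A c] \<open>finite Q\<close> c c0 by (auto simp: A_def)
qed

section \<open>From one-point extensions to the \<open>w\<^sup>*\<close>-LD2P\<close>

lemma dual_norm_gtE:
  fixes x0 :: "'a::metric_space"
  assumes "\<exists>u v::'a. u \<noteq> v" and "t < dual_norm x0 \<mu>"
  obtains f where "f \<in> LipBall x0" and "t < \<bar>\<mu> f\<bar>"
proof -
  have "(\<lambda>_. 0) \<in> LipBall x0"
    by (simp add: LipBall_iff[OF assms(1)] lipschitz_on_def)
  then have "(\<lambda>f. \<bar>\<mu> f\<bar>) ` LipBall x0 \<noteq> {}" by blast
  then have "\<exists>s\<in>(\<lambda>f. \<bar>\<mu> f\<bar>) ` LipBall x0. t < s"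
    using assms(2) unfolding dual_norm_def by (rule less_cSupD)
  then show ?thesis using that by blast
qed

lemma free_space_approx_by_cyc_mono_plan:
  fixes x0 :: "'a::metric_space"
  assumes ex: "\<exists>u v::'a. u \<noteq> v" and "in_free_space x0 \<mu>" and "dual_norm x0 \<mu> = 1" and "0 < \<delta>"
  obtains A c where "finite A" and "cyc_mono A" and "\<forall>q\<in>A. 0 \<le> c q"
    and "\<forall>f\<in>LipBall x0. \<bar>\<mu> f - plan_eval A c f\<bar> \<le> \<delta>" and "1 - 2 * \<delta> < plan_cost A c"
proof -
  obtain S a where "finite S" and S: "\<forall>f\<in>LipBall x0. \<bar>\<mu> f - molecule S a f\<bar> \<le> \<delta>"
    using assms(2,4) unfolding in_free_space_def by blast
  obtain A c where A: "finite A" "cyc_mono A" "\<forall>q\<in>A. 0 \<le> c q"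
    and mol: "\<And>f. f x0 = 0 \<Longrightarrow> molecule S a f = plan_eval A c f"
    using molecule_eq_cyc_mono_plan[OF \<open>finite S\<close>] by blast
  have approx: "\<forall>f\<in>LipBall x0. \<bar>\<mu> f - plan_eval A c f\<bar> \<le> \<delta>"
    using S mol by (simp add: LipBall_iff[OF ex])
  obtain f where f: "f \<in> LipBall x0" and "1 - \<delta> < \<bar>\<mu> f\<bar>"
    using dual_norm_gtE[OF ex, of "1 - \<delta>" x0 \<mu>] assms(3,4) by auto
  moreover have "\<bar>plan_eval A c f\<bar> \<le> plan_cost A c"
    using f A(3) LipBall_iff[OF ex] by (blast intro: abs_plan_eval_le_cost)
  ultimately have "1 - 2 * \<delta> < plan_cost A c"
    using approx by fastforce
  then show ?thesis using that A approx by blast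
qed

lemma lip_diam_eq_twoI:
  assumes "\<And>f g. f \<in> F \<Longrightarrow> g \<in> F \<Longrightarrow> lipnorm (f - g) \<le> 2"
    and "\<And>\<epsilon>. 0 < \<epsilon> \<Longrightarrow> \<exists>f\<in>F. \<exists>g\<in>F. 2 - \<epsilon> < lipnorm (f - g)"
  shows "lip_diam F = 2"
  unfolding lip_diam_def
proof (rule cSup_eq_non_empty)
  show "{lipnorm (f - g) |f g. f \<in> F \<and> g \<in> F} \<noteq> {}"
    using assms(2)[of 1] by auto
  show "\<And>d. d \<in> {lipnorm (f - g) |f g. f \<in> F \<and> g \<in> F} \<Longrightarrow> d \<le> 2"
    using assms(1) by blast
  fix b assume b: "\<And>d. d \<in> {lipnorm (f - g) |f g. f \<in> F \<and> g \<in> F} \<Longrightarrow> d \<le> b"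
  show "2 \<le> b"
  proof (rule ccontr)
    assume "\<not> 2 \<le> b"
    then obtain f g where "f \<in> F" "g \<in> F" "2 - (2 - b) < lipnorm (f - g)"
      using assms(2)[of "2 - b"] by auto
    then show False using b by force
  qed
qed

lemma steep_mem_wstar_slice:
  assumes F: "F \<in> LipBall x0" "steep_on \<gamma> A F" and "0 < \<gamma>" and "\<forall>q\<in>A. 0 \<le> c q"
    and approx: "\<bar>\<mu> F - plan_eval A c F\<bar> \<le> \<delta>" and cost: "\<beta> < plan_cost A c"
    and "1 - \<alpha> \<le> \<gamma> * \<beta> - \<delta>"
  shows "F \<in> wstar_slice x0 \<mu> \<alpha>"
proof -
  have "\<gamma> * \<beta> < \<gamma> * plan_cost A c"
    using cost \<open>0 < \<gamma>\<close> by simp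
  also have "\<dots> \<le> plan_eval A c F"
    using \<open>\<forall>q\<in>A. 0 \<le> c q\<close> F(2) by (rule plan_eval_ge_cost_if_steep)
  finally have "1 - \<alpha> < \<mu> F"
    using approx \<open>1 - \<alpha> \<le> \<gamma> * \<beta> - \<delta>\<close> unfolding abs_le_iff by linarith
  then show ?thesis using F(1) by (simp add: wstar_slice_def)
qed

lemma lipnorm_diff_ge_opposite_steep:
  fixes x0 :: "'a::metric_space"
  assumes ex: "\<exists>u v::'a. u \<noteq> v" and "F \<in> LipBall x0" and "G \<in> LipBall x0" and "u \<noteq> v"
    and "\<gamma> * dist u v \<le> F u - F v" and "\<gamma> * dist u v \<le> G v - G u"
  shows "2 * \<gamma> \<le> lipnorm (F - G)"
proof -
  have "2 * \<gamma> \<le> \<bar>(F - G) u - (F - G) v\<bar> / dist u v"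
    using assms(4-) by (simp add: pos_le_divide_eq)
  also have "\<dots> \<le> lipnorm (F - G)"
  proof (rule slope_le_lipnorm[OF _ \<open>u \<noteq> v\<close>])
    show "(1 + 1)-lipschitz_on UNIV (F - G)"
      using assms(2,3) unfolding fun_diff_def
      by (intro lipschitz_on_diff) (auto simp: LipBall_iff[OF ex])
  qed
  finally show ?thesis .
qed

lemma extension_imp_wstar_LD2P:
  fixes x0 :: "'a::metric_space"
  assumes ex: "\<exists>u v::'a. u \<noteq> v"
    and ext: "\<And>(A :: ('a \<times> 'a) set) \<gamma>. finite A \<Longrightarrow> cyc_mono A \<Longrightarrow> 0 < \<gamma> \<Longrightarrow> \<gamma> < 1 \<Longrightarrow>
      \<exists>u v. u \<noteq> v \<and> gamma_cyc_mono \<gamma> (A \<union> {(u, v)}) \<and> gamma_cyc_mono \<gamma> (A \<union> {(v, u)})"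
  shows "wstar_LD2P x0"
  unfolding wstar_LD2P_def
proof (intro allI impI, elim conjE)
  fix \<mu> and \<alpha> :: real
  assume free: "in_free_space x0 \<mu>" and norm: "dual_norm x0 \<mu> = 1" and "0 < \<alpha>"
  have slice_LipBall: "wstar_slice x0 \<mu> \<alpha> \<subseteq> LipBall x0"
    by (auto simp: wstar_slice_def)
  show "lip_diam (wstar_slice x0 \<mu> \<alpha>) = 2"
  proof (rule lip_diam_eq_twoI)
    show "lipnorm (f - g) \<le> 2" if "f \<in> wstar_slice x0 \<mu> \<alpha>" "g \<in> wstar_slice x0 \<mu> \<alpha>" for f g
      using lipnorm_diff_LipBall_le[OF ex] that slice_LipBall by blast
  next
    fix \<epsilon> :: real assume "0 < \<epsilon>"
    define e where "e = min (min \<alpha> \<epsilon>) 1 / 4"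
    define \<gamma> where "\<gamma> = 1 - e"
    have "0 < e" "e \<le> \<alpha> / 4" "e \<le> \<epsilon> / 4" "e \<le> 1 / 4"
      using \<open>0 < \<alpha>\<close> \<open>0 < \<epsilon>\<close> by (auto simp: e_def)
    then have "0 < \<gamma>" "\<gamma> < 1" by (auto simp: \<gamma>_def)
    obtain A c where A: "finite A" "cyc_mono A" "\<forall>q\<in>A. 0 \<le> c q"
      and approx: "\<forall>f\<in>LipBall x0. \<bar>\<mu> f - plan_eval A c f\<bar> \<le> e / 4"
      and cost: "1 - 2 * (e / 4) < plan_cost A c"
      using free_space_approx_by_cyc_mono_plan[OF ex free norm, of "e / 4"] \<open>0 < e\<close> by auto
    have "\<gamma> * (1 - 2 * (e / 4)) - e / 4 = 1 - 7 / 4 * e + e * e / 2"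
      by (simp add: \<gamma>_def field_simps)
    moreover have "0 \<le> e * e" by simp
    ultimately have margin: "1 - \<alpha> \<le> \<gamma> * (1 - 2 * (e / 4)) - e / 4"
      using \<open>e \<le> \<alpha> / 4\<close> \<open>0 < e\<close> by linarith
    have steep_in_slice: "\<exists>F\<in>wstar_slice x0 \<mu> \<alpha>. \<gamma> * dist x y \<le> F x - F y"
      if "gamma_cyc_mono \<gamma> (A \<union> {(x, y)})" for x y
    proof -
      obtain f where lip: "1-lipschitz_on UNIV f" and steep: "steep_on \<gamma> (A \<union> {(x, y)}) f"
        using \<open>gamma_cyc_mono \<gamma> (A \<union> {(x, y)})\<close> by (auto simp: gamma_cyc_mono_iff_potential)
      define F where "F = (\<lambda>z. f z - f x0)"
      have "F \<in> LipBall x0"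
        unfolding F_def using shift_mem_LipBall[OF ex lip] .
      moreover have "steep_on \<gamma> A F" and "\<gamma> * dist x y \<le> F x - F y"
        using steep by (simp_all add: F_def steep_on_shift)
      ultimately show ?thesis
        using steep_mem_wstar_slice[OF _ _ \<open>0 < \<gamma>\<close> A(3) _ cost margin] approx by blast
    qed
    obtain u v where "u \<noteq> v"
      and "gamma_cyc_mono \<gamma> (A \<union> {(u, v)})" and "gamma_cyc_mono \<gamma> (A \<union> {(v, u)})"
      using ext[OF A(1,2) \<open>0 < \<gamma>\<close> \<open>\<gamma> < 1\<close>] by blast
    then obtain F G where "F \<in> wstar_slice x0 \<mu> \<alpha>" "G \<in> wstar_slice x0 \<mu> \<alpha>"
      and "\<gamma> * dist u v \<le> F u - F v" and "\<gamma> * dist u v \<le> G v - G u"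
      using steep_in_slice by (metis dist_commute)
    moreover from this have "2 * \<gamma> \<le> lipnorm (F - G)"
      using lipnorm_diff_ge_opposite_steep[OF ex _ _ \<open>u \<noteq> v\<close>] slice_LipBall by blast
    moreover have "2 - \<epsilon> < 2 * \<gamma>"
      using \<open>0 < e\<close> \<open>e \<le> \<epsilon> / 4\<close> by (simp add: \<gamma>_def)
    ultimately show "\<exists>f\<in>wstar_slice x0 \<mu> \<alpha>. \<exists>g\<in>wstar_slice x0 \<mu> \<alpha>. 2 - \<epsilon> < lipnorm (f - g)"
      by force
  qed
qed

theorem proposition4p3:
  fixes x0 :: "'a::metric_space"
  assumes "\<exists>u v :: 'a. u \<noteq> v"
  shows "wstar_LD2P x0 \<longleftrightarrow>
    (\<forall>(A :: ('a \<times> 'a) set) \<gamma>. finite A \<and> A \<subseteq> tildeM \<and> cyc_mono A \<and> 0 < \<gamma> \<and> \<gamma> < 1 \<longrightarrow>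
       (\<exists>u v. u \<noteq> v \<and> gamma_cyc_mono \<gamma> (A \<union> {(u, v)}) \<and> gamma_cyc_mono \<gamma> (A \<union> {(v, u)})))"
    (is "_ \<longleftrightarrow> (\<forall>A \<gamma>. ?hyps A \<gamma> \<longrightarrow> ?extension A \<gamma>)")
proof
  assume LD: "wstar_LD2P x0"
  show "\<forall>A \<gamma>. ?hyps A \<gamma> \<longrightarrow> ?extension A \<gamma>"
    using wstar_LD2P_imp_extension[OF assms LD] by simp
next
  assume ext: "\<forall>A \<gamma>. ?hyps A \<gamma> \<longrightarrow> ?extension A \<gamma>"
  show "wstar_LD2P x0"
  proof (rule extension_imp_wstar_LD2P[OF assms])
    fix A :: "('a \<times> 'a) set" and \<gamma> :: real
    assume "finite A" "cyc_mono A" "0 < \<gamma>" "\<gamma> < 1"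
    then show "?extension A \<gamma>"
      using ext cyc_mono_def by blast
  qed
qed

end
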